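(* Let $(\mathfrak g,J)$ be a real Lie algebra with integrable complex structure, let $(E,I)$ be a real vector space with complex structure, and let $\rho:\mathfrak g\to\operatorname{End}E$ be a representation. Then the following are equivalent: (i) $\rho$ is integrable, i.e. $\mathcal N(x):=[I,\rho(Jx)]+I[\rho(x),I]=0$ for all $x\in\mathfrak g$; (ii) for all $X\in\mathfrak g^{1,0}$ the map $\rho(X)$ has no component in $\operatorname{Hom}(E^{1,0},E^{0,1})$; (iii) $E^{1,0}$ is invariant under the action of $\mathfrak g^{1,0}$; (iv) $\rho|_{\mathfrak g^{1,0}}$ induces by restriction a $\mathbb C$-linear representation of $\mathfrak g^{1,0}$ on $E^{1,0}$.
   Context: A complex structure on a real Lie algebra $\mathfrak g$ is $J\in\operatorname{End}\mathfrak g$ with $J^2=-\mathrm{id}$ and $[x,y]-[Jx,Jy]+J[Jx,y]+J[x,Jy]=0$ for all $x,y$. $\mathfrak g_{\mathbb C}=\mathfrak g^{1,0}\oplus\mathfrak g^{0,1}$ and $E_{\mathbb C}=E^{1,0}\oplus E^{0,1}$ denote the $\pm i$-eigenspace decompositions of the $\mathbb C$-linear extensions of $J$ and $I$; $\rho$ is extended $\mathbb C$-linearly to $\mathfrak g_{\mathbb C}\to\operatorname{End}E_{\mathbb C}$. *)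

theory Defs
  imports "HOL-Analysis.Analysis"
begin

(* Real Lie algebras are modelled by a real vector space type with a bracket
  operation; the complexification V_C = V \<otimes> C is modelled as pairs (x,y) = x + i y. *)

definition real_lie_algebra :: "('g::real_vector \<Rightarrow> 'g \<Rightarrow> 'g) \<Rightarrow> bool" where
  "real_lie_algebra br \<longleftrightarrow>
     (\<forall>x. linear (br x)) \<and> (\<forall>y. linear (\<lambda>x. br x y)) \<and>
     (\<forall>x y. br x y = - br y x) \<and>
     (\<forall>x y z. br x (br y z) + br y (br z x) + br z (br x y) = 0)"

definition complex_structure :: "('a::real_vector \<Rightarrow> 'a) \<Rightarrow> bool" where
  "complex_structure J \<longleftrightarrow> linear J \<and> (\<forall>x. J (J x) = - x)"

definition integrable_complex_structure ::
  "('g::real_vector \<Rightarrow> 'g \<Rightarrow> 'g) \<Rightarrow> ('g \<Rightarrow> 'g) \<Rightarrow> bool" where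
  "integrable_complex_structure br J \<longleftrightarrow> complex_structure J \<and>
     (\<forall>x y. br x y - br (J x) (J y) + J (br (J x) y) + J (br x (J y)) = 0)"

definition comm :: "('e::ab_group_add \<Rightarrow> 'e) \<Rightarrow> ('e \<Rightarrow> 'e) \<Rightarrow> 'e \<Rightarrow> 'e" where
  "comm A B = (\<lambda>v. A (B v) - B (A v))"

definition representation ::
  "('g::real_vector \<Rightarrow> 'g \<Rightarrow> 'g) \<Rightarrow> ('g \<Rightarrow> 'e::real_vector \<Rightarrow> 'e) \<Rightarrow> bool" where
  "representation br \<rho> \<longleftrightarrow> (\<forall>v. linear (\<lambda>x. \<rho> x v)) \<and> (\<forall>x. linear (\<rho> x)) \<and>
     (\<forall>x y. \<rho> (br x y) = comm (\<rho> x) (\<rho> y))"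

definition nijenhuis_rep ::
  "('g \<Rightarrow> 'g) \<Rightarrow> ('e::ab_group_add \<Rightarrow> 'e) \<Rightarrow> ('g \<Rightarrow> 'e \<Rightarrow> 'e) \<Rightarrow> 'g \<Rightarrow> 'e \<Rightarrow> 'e" where
  "nijenhuis_rep J I \<rho> x = (\<lambda>v. comm I (\<rho> (J x)) v + I (comm (\<rho> x) I v))"

definition integrable_rep ::
  "('g \<Rightarrow> 'g) \<Rightarrow> ('e::ab_group_add \<Rightarrow> 'e) \<Rightarrow> ('g \<Rightarrow> 'e \<Rightarrow> 'e) \<Rightarrow> bool" where
  "integrable_rep J I \<rho> \<longleftrightarrow> (\<forall>x v. nijenhuis_rep J I \<rho> x v = 0)"

definition cscale :: "complex \<Rightarrow> 'a::real_vector \<times> 'a \<Rightarrow> 'a \<times> 'a" where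
  "cscale c w = (Re c *\<^sub>R fst w - Im c *\<^sub>R snd w, Im c *\<^sub>R fst w + Re c *\<^sub>R snd w)"

definition cext :: "('a \<Rightarrow> 'b) \<Rightarrow> 'a \<times> 'a \<Rightarrow> 'b \<times> 'b" where
  "cext L w = (L (fst w), L (snd w))"

definition bracketC :: "('g::ab_group_add \<Rightarrow> 'g \<Rightarrow> 'g) \<Rightarrow> 'g \<times> 'g \<Rightarrow> 'g \<times> 'g \<Rightarrow> 'g \<times> 'g" where
  "bracketC br X Y = (br (fst X) (fst Y) - br (snd X) (snd Y),
                     br (fst X) (snd Y) + br (snd X) (fst Y))"

definition rhoC :: "('g \<Rightarrow> 'e::ab_group_add \<Rightarrow> 'e) \<Rightarrow> 'g \<times> 'g \<Rightarrow> 'e \<times> 'e \<Rightarrow> 'e \<times> 'e" where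
  "rhoC \<rho> X w = (\<rho> (fst X) (fst w) - \<rho> (snd X) (snd w),
                  \<rho> (fst X) (snd w) + \<rho> (snd X) (fst w))"

(* The +i eigenspace V^{1,0} and -i eigenspace V^{0,1} of the extension of J. *)
definition hol_part :: "('a::real_vector \<Rightarrow> 'a) \<Rightarrow> ('a \<times> 'a) set" where
  "hol_part J = {w. cext J w = cscale \<i> w}"

definition antihol_part :: "('a::real_vector \<Rightarrow> 'a) \<Rightarrow> ('a \<times> 'a) set" where
  "antihol_part J = {w. cext J w = cscale (- \<i>) w}"

definition proj10 :: "('a::real_vector \<Rightarrow> 'a) \<Rightarrow> 'a \<times> 'a \<Rightarrow> 'a \<times> 'a" where
  "proj10 J w = cscale (1/2) (w - cscale \<i> (cext J w))"

definition proj01 :: "('a::real_vector \<Rightarrow> 'a) \<Rightarrow> 'a \<times> 'a \<Rightarrow> 'a \<times> 'a" where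
  "proj01 J w = cscale (1/2) (w + cscale \<i> (cext J w))"

definition comp_10_to_01 ::
  "('e::real_vector \<Rightarrow> 'e) \<Rightarrow> ('e \<times> 'e \<Rightarrow> 'e \<times> 'e) \<Rightarrow> 'e \<times> 'e \<Rightarrow> 'e \<times> 'e" where
  "comp_10_to_01 I A = proj01 I \<circ> A \<circ> proj10 I"

definition induces_complex_rep_10 ::
  "('g::real_vector \<Rightarrow> 'g \<Rightarrow> 'g) \<Rightarrow> ('g \<Rightarrow> 'g) \<Rightarrow> ('e::real_vector \<Rightarrow> 'e)
     \<Rightarrow> ('g \<Rightarrow> 'e \<Rightarrow> 'e) \<Rightarrow> bool" where
  "induces_complex_rep_10 br J I \<rho> \<longleftrightarrow>
     \<comment> \<open>restriction is well defined: E^{1,0} is mapped into itself\<close>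
     (\<forall>X\<in>hol_part J. \<forall>w\<in>hol_part I. rhoC \<rho> X w \<in> hol_part I) \<and>
     \<comment> \<open>each rho(X) restricted to E^{1,0} is C-linear\<close>
     (\<forall>X\<in>hol_part J. \<forall>v\<in>hol_part I. \<forall>w\<in>hol_part I. \<forall>c.
        rhoC \<rho> X (v + w) = rhoC \<rho> X v + rhoC \<rho> X w \<and>
        rhoC \<rho> X (cscale c w) = cscale c (rhoC \<rho> X w)) \<and>
     \<comment> \<open>X \<mapsto> rho(X)|E^{1,0} is C-linear on g^{1,0}\<close>
     (\<forall>X\<in>hol_part J. \<forall>Y\<in>hol_part J. \<forall>w\<in>hol_part I. \<forall>c.
        rhoC \<rho> (X + Y) w = rhoC \<rho> X w + rhoC \<rho> Y w \<and>
        rhoC \<rho> (cscale c X) w = cscale c (rhoC \<rho> X w)) \<and>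
     \<comment> \<open>g^{1,0} is a (complex) Lie subalgebra and the restriction respects brackets\<close>
     (\<forall>X\<in>hol_part J. \<forall>Y\<in>hol_part J. bracketC br X Y \<in> hol_part J \<and>
        (\<forall>w\<in>hol_part I. rhoC \<rho> (bracketC br X Y) w
            = rhoC \<rho> X (rhoC \<rho> Y w) - rhoC \<rho> Y (rhoC \<rho> X w)))"

end

theory Submission
  imports Defs
begin

(*
  Every element of V^{1,0} has the form x - i K x with x real. Evaluating rho(x - i J x) on
  a - i I a and asking for the result to lie in E^{1,0} gives exactly I (N(x) a) = 0, so
  integrability of rho is the g^{1,0}-invariance of E^{1,0}. That invariance is the vanishing
  of the Hom(E^{1,0}, E^{0,1})-components, because E^{1,0} is both the kernel of the
  projection onto E^{0,1} and the image of the projection onto E^{1,0}. The remaining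
  properties of the induced representation hold for every representation: the complexified
  action is complex bilinear and respects brackets, and g^{1,0} is a subalgebra because J is
  integrable.
*)

lemma real_lie_algebra_bilinear: "real_lie_algebra br \<Longrightarrow> bilinear br"
  unfolding real_lie_algebra_def bilinear_def by blast

lemma representation_bilinear: "representation br \<rho> \<Longrightarrow> bilinear \<rho>"
  unfolding representation_def bilinear_def by blast

lemma integrable_complex_structure_imp_complex_structure:
  "integrable_complex_structure br J \<Longrightarrow> complex_structure J"
  by (simp add: integrable_complex_structure_def)

locale complex_structure_space =
  fixes K :: "'a::real_vector \<Rightarrow> 'a"
  assumes complex_structure: "complex_structure K"
begin

lemma linear: "linear K"
  using complex_structure by (simp add: complex_structure_def)

lemma K_simps [simp]:
  "K (a + b) = K a + K b" "K (- a) = - K a" "K (a - b) = K a - K b"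
  "K (r *\<^sub>R a) = r *\<^sub>R K a" "K 0 = 0"
  using linear by (simp_all add: linear_add linear_neg linear_diff linear_scale linear_0)

lemma K_K [simp]: "K (K a) = - a"
  using complex_structure by (simp add: complex_structure_def)

lemma K_eq_0_iff [simp]: "K a = 0 \<longleftrightarrow> a = 0"
  by (metis K_K K_simps(5) neg_equal_0_iff_equal)

lemma Pair_mem_hol_part_iff [simp]: "(a, b) \<in> hol_part K \<longleftrightarrow> b = - K a"
proof -
  have "(a, b) \<in> hol_part K \<longleftrightarrow> K a = - b \<and> K b = a"
    by (simp add: hol_part_def cext_def cscale_def)
  also have "\<dots> \<longleftrightarrow> b = - K a"
    by (metis K_K K_simps(2) minus_minus)
  finally show ?thesis .
qed

lemma hol_part_eq: "w \<in> hol_part K \<Longrightarrow> w = (fst w, - K (fst w))"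
  by (cases w) simp

lemma ball_hol_part_iff: "(\<forall>w\<in>hol_part K. P w) \<longleftrightarrow> (\<forall>a. P (a, - K a))"
  by (metis Pair_mem_hol_part_iff hol_part_eq)

lemma proj01_eq_0_iff: "proj01 K w = 0 \<longleftrightarrow> w \<in> hol_part K"
proof (cases w)
  case (Pair a b)
  have "proj01 K w = ((1/2) *\<^sub>R (a - K b), (1/2) *\<^sub>R (b + K a))"
    unfolding Pair proj01_def cscale_def cext_def by (simp add: algebra_simps)
  moreover have "a - K b = 0 \<and> b + K a = 0 \<longleftrightarrow> b = - K a"
    by (metis K_K K_simps(2) minus_minus add_eq_0_iff eq_iff_diff_eq_0)
  ultimately show ?thesis
    using Pair by (simp add: zero_prod_def)
qed

lemma proj10_eq: "proj10 K (a, b) = ((1/2) *\<^sub>R (a + K b), (1/2) *\<^sub>R (b - K a))"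
  unfolding proj10_def cscale_def cext_def by (simp add: algebra_simps)

lemma proj10_mem_hol_part: "proj10 K w \<in> hol_part K"
  by (cases w) (simp add: proj10_eq algebra_simps)

lemma proj10_hol_part: "w \<in> hol_part K \<Longrightarrow> proj10 K w = w"
  by (cases w) (simp add: proj10_eq diff_conv_add_uminus flip: scaleR_2)

lemma comp_10_to_01_eq_0_iff:
  "comp_10_to_01 K A = (\<lambda>_. 0) \<longleftrightarrow> (\<forall>w\<in>hol_part K. A w \<in> hol_part K)"
proof
  assume "comp_10_to_01 K A = (\<lambda>_. 0)"
  then have "proj01 K (A (proj10 K w)) = 0" for w
    by (metis comp_10_to_01_def comp_apply)
  then show "\<forall>w\<in>hol_part K. A w \<in> hol_part K"
    by (metis proj01_eq_0_iff proj10_hol_part)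
next
  assume "\<forall>w\<in>hol_part K. A w \<in> hol_part K"
  then show "comp_10_to_01 K A = (\<lambda>_. 0)"
    by (simp add: fun_eq_iff comp_10_to_01_def proj01_eq_0_iff proj10_mem_hol_part)
qed

end

lemma rhoC_hol_part_iff_nijenhuis_rep:
  assumes "complex_structure I" and \<rho>: "bilinear \<rho>"
  shows "rhoC \<rho> (x, - J x) (a, - I a) \<in> hol_part I \<longleftrightarrow> nijenhuis_rep J I \<rho> x a = 0"
proof -
  interpret I: complex_structure_space I by unfold_locales fact
  note \<rho>_simps = bilinear_radd[OF \<rho>] bilinear_rneg[OF \<rho>] bilinear_rsub[OF \<rho>]
  let ?re = "\<rho> x a - \<rho> (J x) (I a)" and ?im = "- \<rho> x (I a) - \<rho> (J x) a"
  have rhoC_eq: "rhoC \<rho> (x, - J x) (a, - I a) = (?re, ?im)"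
    unfolding rhoC_def by (simp add: bilinear_lneg[OF \<rho>] bilinear_rneg[OF \<rho>])
  have I_nijenhuis: "I (nijenhuis_rep J I \<rho> x a) = ?im - (- I ?re)"
    unfolding nijenhuis_rep_def comm_def by (simp add: \<rho>_simps algebra_simps)
  have "rhoC \<rho> (x, - J x) (a, - I a) \<in> hol_part I \<longleftrightarrow> ?im = - I ?re"
    by (simp only: rhoC_eq I.Pair_mem_hol_part_iff)
  also have "\<dots> \<longleftrightarrow> I (nijenhuis_rep J I \<rho> x a) = 0"
    unfolding I_nijenhuis by (rule eq_iff_diff_eq_0)
  also have "\<dots> \<longleftrightarrow> nijenhuis_rep J I \<rho> x a = 0"
    by (rule I.K_eq_0_iff)
  finally show ?thesis .
qed

lemma hol_part_invariant_iff_integrable_rep: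
  assumes "complex_structure J" and "complex_structure I" and "bilinear \<rho>"
  shows "(\<forall>X\<in>hol_part J. \<forall>w\<in>hol_part I. rhoC \<rho> X w \<in> hol_part I) \<longleftrightarrow> integrable_rep J I \<rho>"
proof -
  interpret J: complex_structure_space J by unfold_locales fact
  interpret I: complex_structure_space I by unfold_locales fact
  show ?thesis
    by (simp add: J.ball_hol_part_iff I.ball_hol_part_iff integrable_rep_def
        rhoC_hol_part_iff_nijenhuis_rep assms)
qed

lemma rhoC_add_right: "bilinear \<rho> \<Longrightarrow> rhoC \<rho> X (v + w) = rhoC \<rho> X v + rhoC \<rho> X w"
  by (simp add: rhoC_def bilinear_radd algebra_simps)

lemma rhoC_add_left: "bilinear \<rho> \<Longrightarrow> rhoC \<rho> (X + Y) w = rhoC \<rho> X w + rhoC \<rho> Y w"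
  by (simp add: rhoC_def bilinear_ladd algebra_simps)

lemma rhoC_cscale_right: "bilinear \<rho> \<Longrightarrow> rhoC \<rho> X (cscale c w) = cscale c (rhoC \<rho> X w)"
  by (simp add: rhoC_def cscale_def bilinear_radd bilinear_rsub bilinear_rmul algebra_simps)

lemma rhoC_cscale_left: "bilinear \<rho> \<Longrightarrow> rhoC \<rho> (cscale c X) w = cscale c (rhoC \<rho> X w)"
  by (simp add: rhoC_def cscale_def bilinear_ladd bilinear_lsub bilinear_lmul algebra_simps)

lemma rhoC_bracketC:
  assumes "representation br \<rho>"
  shows "rhoC \<rho> (bracketC br X Y) w = rhoC \<rho> X (rhoC \<rho> Y w) - rhoC \<rho> Y (rhoC \<rho> X w)"
proof -
  have \<rho>: "bilinear \<rho>" and "\<rho> (br x y) = comm (\<rho> x) (\<rho> y)" for x y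
    using assms representation_bilinear by (auto simp: representation_def)
  then show ?thesis
    by (simp add: rhoC_def bracketC_def comm_def bilinear_ladd bilinear_lsub
        bilinear_radd bilinear_rsub algebra_simps)
qed

lemma bracketC_mem_hol_part:
  assumes J: "integrable_complex_structure br J" and br: "bilinear br"
    and "X \<in> hol_part J" and "Y \<in> hol_part J"
  shows "bracketC br X Y \<in> hol_part J"
proof -
  interpret J: complex_structure_space J
    by unfold_locales (rule integrable_complex_structure_imp_complex_structure[OF J])
  obtain x y where X: "X = (x, - J x)" and Y: "Y = (y, - J y)"
    using J.hol_part_eq assms(3,4) by metis
  have "J (br x y - br (J x) (J y) + J (br (J x) y) + J (br x (J y))) = 0"
    using J by (simp add: integrable_complex_structure_def)
  then have "- br x (J y) - br (J x) y = - J (br x y - br (J x) (J y))"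
    by (simp add: algebra_simps)
  then show ?thesis
    unfolding X Y bracketC_def
    by (simp add: bilinear_lneg[OF br] bilinear_rneg[OF br])
qed

lemma induces_complex_rep_10_iff_hol_part_invariant:
  assumes "integrable_complex_structure br J" and "bilinear br" and "representation br \<rho>"
  shows "induces_complex_rep_10 br J I \<rho> \<longleftrightarrow>
    (\<forall>X\<in>hol_part J. \<forall>w\<in>hol_part I. rhoC \<rho> X w \<in> hol_part I)"
  using assms representation_bilinear[OF assms(3)]
  by (simp add: induces_complex_rep_10_def rhoC_add_right rhoC_add_left rhoC_cscale_right
      rhoC_cscale_left rhoC_bracketC bracketC_mem_hol_part)

theorem mainTheorem2:
  fixes br :: "'g::real_vector \<Rightarrow> 'g \<Rightarrow> 'g" and J :: "'g \<Rightarrow> 'g"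
    and I :: "'e::real_vector \<Rightarrow> 'e" and \<rho> :: "'g \<Rightarrow> 'e \<Rightarrow> 'e"
  assumes "real_lie_algebra br"
    and "integrable_complex_structure br J"
    and "complex_structure I"
    and "representation br \<rho>"
  shows "(integrable_rep J I \<rho> \<longleftrightarrow>
           (\<forall>X\<in>hol_part J. comp_10_to_01 I (rhoC \<rho> X) = (\<lambda>_. 0))) \<and>
         ((\<forall>X\<in>hol_part J. comp_10_to_01 I (rhoC \<rho> X) = (\<lambda>_. 0)) \<longleftrightarrow>
           (\<forall>X\<in>hol_part J. \<forall>w\<in>hol_part I. rhoC \<rho> X w \<in> hol_part I)) \<and>
         ((\<forall>X\<in>hol_part J. \<forall>w\<in>hol_part I. rhoC \<rho> X w \<in> hol_part I) \<longleftrightarrow>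
           induces_complex_rep_10 br J I \<rho>)"
proof -
  interpret I: complex_structure_space I by unfold_locales fact
  have bilinear: "bilinear br" "bilinear \<rho>"
    using assms(1,4) real_lie_algebra_bilinear representation_bilinear by blast+
  show ?thesis
    using hol_part_invariant_iff_integrable_rep[OF
        integrable_complex_structure_imp_complex_structure[OF assms(2)] assms(3) bilinear(2)]
      induces_complex_rep_10_iff_hol_part_invariant[OF assms(2) bilinear(1) assms(4)]
    by (simp add: I.comp_10_to_01_eq_0_iff)
qed

end
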